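(* Let $n \ge 2$ be an integer, $\lambda > 0$ a real number and $C \ge 1$. There exists a constant $C'>0$ depending only on $n$ and $C$ such that the following hold. (i) Let $\xi$ be a real number with $C^{-1} \le |\xi| \le C$, and let $(p_0,\ldots,p_n) \in \mathbb{Z}^{n+1}$ with $q := p_0 \ge 1$ and $|q\xi^i - p_i| \le C q^{-\lambda}$ for $i = 1,\ldots,n$. Then $|p_i\xi - p_{i+1}| \le C' q^{-\lambda}$ for all $i\in\{0,\ldots,n-1\}$, and $|p_{i-1}p_{i+1} - p_i^2| \le C' q^{1-\lambda}$ for all $i \in \{1,\ldots,n-1\}$. (ii) Conversely, let $(p_0,\ldots,p_n) \in \mathbb{Z}^{n+1}$ with $q := p_0 \ge 1$, $C^{-1} q \le |p_i| \le C q$ for all $i \in \{0,\ldots,n\}$, and $|p_{i-1}p_{i+1} - p_i^2| \le C q^{1-\lambda}$ for all $i \in \{1,\ldots,n-1\}$. Then there exists a real number $\xi$ with $|q\xi^i - p_i| \le C' q^{-\lambda}$ for $i = 1,\ldots,n$.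
   Context: The paper writes these statements with Vinogradov notation ($\ll$, $\asymp$ with implied constants depending on the fixed data); here the implied constants are made explicit. *)

theory Defs
  imports Complex_Main
begin

end

theory Submission
  imports Defs
begin

text \<open>
  Write p(i) = q \<xi>^i + e(i). Then p(i) \<xi> - p(i+1) is linear in the errors e(j), and in the
  minor p(i-1) p(i+1) - p(i)^2 the terms of order q^2 cancel because \<xi>^(i-1) \<xi>^(i+1) = \<xi>^(2i),
  leaving O(q max e(j)); this gives (i).
  For (ii) take \<xi> = p(1)/q. As all |p(i)| are of size q, consecutive ratios differ by
  p(i+1)/p(i) - p(i)/p(i-1) = minor / (p(i) p(i-1)) = O(q^(-1-\<lambda>)), so by telescoping every
  ratio p(k+1)/p(k) is within O(q^(-1-\<lambda>)) of \<xi>, i.e. |p(k+1) - \<xi> p(k)| = O(q^(-\<lambda>)).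
  These shift errors accumulate in |p(k) - q \<xi>^k| with at most a geometric factor C^k.
\<close>

lemma shift_error_le_power_error:
  fixes a :: "nat \<Rightarrow> real"
  assumes "\<bar>a i - Q * \<xi> ^ i\<bar> \<le> \<epsilon>" and "\<bar>a (i+1) - Q * \<xi> ^ (i+1)\<bar> \<le> \<epsilon>"
  shows "\<bar>a i * \<xi> - a (i+1)\<bar> \<le> (\<bar>\<xi>\<bar> + 1) * \<epsilon>"
proof -
  have "a i * \<xi> - a (i+1) = (a i - Q * \<xi> ^ i) * \<xi> - (a (i+1) - Q * \<xi> ^ (i+1))"
    by (simp add: algebra_simps)
  also have "\<bar>\<dots>\<bar> \<le> \<bar>a i - Q * \<xi> ^ i\<bar> * \<bar>\<xi>\<bar> + \<bar>a (i+1) - Q * \<xi> ^ (i+1)\<bar>"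
    by (metis abs_mult abs_triangle_ineq4)
  also have "\<dots> \<le> \<epsilon> * \<bar>\<xi>\<bar> + \<epsilon>"
    using assms by (intro add_mono mult_right_mono) auto
  finally show ?thesis by (simp add: algebra_simps)
qed

lemma minor_perturbation_eq:
  fixes Q x y z u v w :: "'a :: comm_ring_1"
  assumes "x * z = y * y"
  shows "(Q * x + u) * (Q * z + w) - (Q * y + v)\<^sup>2
    = Q * x * w + Q * z * u - 2 * (Q * y * v) + (u * w - v * v)"
proof -
  have "(Q * x + u) * (Q * z + w) - (Q * y + v)\<^sup>2
      = Q * Q * (x * z - y * y) + Q * x * w + Q * z * u - 2 * (Q * y * v) + (u * w - v * v)"
    by (simp add: algebra_simps power2_eq_square)
  then show ?thesis using assms by simp
qed

lemma minor_le_power_error: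
  fixes a :: "nat \<Rightarrow> real"
  assumes i: "1 \<le> i" and Q: "0 \<le> Q"
    and err: "\<And>j. j \<in> {i-1..i+1} \<Longrightarrow> \<bar>a j - Q * \<xi> ^ j\<bar> \<le> \<epsilon>"
    and pow: "\<And>j. j \<in> {i-1..i+1} \<Longrightarrow> \<bar>\<xi>\<bar> ^ j \<le> M"
  shows "\<bar>a (i-1) * a (i+1) - a i ^ 2\<bar> \<le> 4 * Q * M * \<epsilon> + 2 * \<epsilon>\<^sup>2"
proof -
  define e where "e j = a j - Q * \<xi> ^ j" for j
  have e: "\<bar>e j\<bar> \<le> \<epsilon>" and \<xi>: "\<bar>\<xi>\<bar> ^ j \<le> M" if "j \<in> {i-1..i+1}" for j
    using err pow that unfolding e_def by auto
  have a: "a j = Q * \<xi> ^ j + e j" for j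
    unfolding e_def by simp
  have "\<xi> ^ (i-1) * \<xi> ^ (i+1) = \<xi> ^ i * \<xi> ^ i"
    using i by (metis Suc_eq_plus1 le_add_diff_inverse2 mult.assoc mult.commute power_Suc)
  then have "a (i-1) * a (i+1) - a i ^ 2
      = Q * \<xi> ^ (i-1) * e (i+1) + Q * \<xi> ^ (i+1) * e (i-1) - 2 * (Q * \<xi> ^ i * e i)
        + (e (i-1) * e (i+1) - e i * e i)"
    unfolding a[of "i-1"] a[of "i+1"] a[of i] by (rule minor_perturbation_eq)
  also have "\<bar>\<dots>\<bar> \<le> Q * M * \<epsilon> + Q * M * \<epsilon> + 2 * (Q * M * \<epsilon>) + 2 * \<epsilon>\<^sup>2"
  proof -
    have linear: "\<bar>Q * \<xi> ^ j * e k\<bar> \<le> Q * M * \<epsilon>" if "j \<in> {i-1..i+1}" "k \<in> {i-1..i+1}" for j k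
    proof -
      have "\<bar>\<xi>\<bar> ^ j * \<bar>e k\<bar> \<le> M * \<epsilon>"
        using \<xi>[OF that(1)] e[OF that(2)] by (intro mult_mono') auto
      then show ?thesis using Q by (simp add: abs_mult power_abs mult.assoc mult_left_mono)
    qed
    have quadratic: "\<bar>e j * e k\<bar> \<le> \<epsilon>\<^sup>2" if "j \<in> {i-1..i+1}" "k \<in> {i-1..i+1}" for j k
      using e[OF that(1)] e[OF that(2)] by (simp add: abs_mult power2_eq_square mult_mono')
    have "\<bar>e (i-1) * e (i+1)\<bar> \<le> \<epsilon>\<^sup>2" "\<bar>e i * e i\<bar> \<le> \<epsilon>\<^sup>2"
      "\<bar>Q * \<xi> ^ (i-1) * e (i+1)\<bar> \<le> Q * M * \<epsilon>" "\<bar>Q * \<xi> ^ (i+1) * e (i-1)\<bar> \<le> Q * M * \<epsilon>"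
      "\<bar>Q * \<xi> ^ i * e i\<bar> \<le> Q * M * \<epsilon>"
      using quadratic[of "i-1" "i+1"] quadratic[of i i]
        linear[of "i-1" "i+1"] linear[of "i+1" "i-1"] linear[of i i]
      by simp_all
    then show ?thesis by linarith
  qed
  finally show ?thesis by (simp add: algebra_simps)
qed

lemma power_error_le_shift_error:
  fixes a :: "nat \<Rightarrow> real"
  assumes a0: "a 0 = Q" and \<xi>: "\<bar>\<xi>\<bar> \<le> C" and C: "1 \<le> C" and \<eta>: "0 \<le> \<eta>"
    and shift: "\<And>k. k < n \<Longrightarrow> \<bar>a (k+1) - \<xi> * a k\<bar> \<le> \<eta>"
  shows "k \<le> n \<Longrightarrow> \<bar>a k - Q * \<xi> ^ k\<bar> \<le> k * C ^ k * \<eta>"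
proof (induction k)
  case 0
  then show ?case using a0 by simp
next
  case (Suc k)
  have "a (Suc k) - Q * \<xi> ^ Suc k = (a (k+1) - \<xi> * a k) + \<xi> * (a k - Q * \<xi> ^ k)"
    by (simp add: algebra_simps)
  also have "\<bar>\<dots>\<bar> \<le> \<bar>a (k+1) - \<xi> * a k\<bar> + \<bar>\<xi>\<bar> * \<bar>a k - Q * \<xi> ^ k\<bar>"
    by (metis abs_mult abs_triangle_ineq)
  also have "\<dots> \<le> \<eta> + C * (k * C ^ k * \<eta>)"
    using shift[of k] Suc \<xi> by (intro add_mono mult_mono') auto
  also have "\<dots> \<le> C ^ Suc k * \<eta> + k * C ^ Suc k * \<eta>"
    using mult_right_mono[OF one_le_power[OF C, of "Suc k"] \<eta>] by (simp add: algebra_simps)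
  finally show ?case by (simp add: algebra_simps)
qed

lemma abs_diff_le_of_steps:
  fixes d :: "nat \<Rightarrow> real"
  assumes "\<And>j. j < k \<Longrightarrow> \<bar>d (Suc j) - d j\<bar> \<le> \<delta>"
  shows "\<bar>d k - d 0\<bar> \<le> k * \<delta>"
  using assms
proof (induction k)
  case (Suc k)
  then have "\<bar>d k - d 0\<bar> \<le> k * \<delta>" "\<bar>d (Suc k) - d k\<bar> \<le> \<delta>" by auto
  then show ?case by (simp add: algebra_simps)
qed simp

lemma ratio_diff_eq_minor:
  fixes x y z :: "'a :: field"
  assumes "x \<noteq> 0" and "y \<noteq> 0"
  shows "z / y - y / x = (x * z - y\<^sup>2) / (x * y)"
  using assms by (simp add: field_simps power2_eq_square)

lemma shift_error_le_minor_bound: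
  fixes a :: "nat \<Rightarrow> real"
  assumes C: "1 \<le> C" and Q: "0 < Q" and a0: "a 0 = Q"
    and size: "\<And>i. i \<le> n \<Longrightarrow> Q / C \<le> \<bar>a i\<bar> \<and> \<bar>a i\<bar> \<le> C * Q"
    and minor: "\<And>i. i \<in> {1..<n} \<Longrightarrow> \<bar>a (i-1) * a (i+1) - a i ^ 2\<bar> \<le> \<mu>"
    and k: "k < n"
  shows "\<bar>a (k+1) - a 1 / Q * a k\<bar> \<le> k * C ^ 3 * \<mu> / Q"
proof -
  define r where "r j = a (Suc j) / a j" for j
  have QC: "0 < Q / C" using C Q by simp
  have step: "\<bar>r (Suc j) - r j\<bar> \<le> \<mu> / (Q / C)\<^sup>2" if j: "Suc j < n" for j
  proof -
    have lower: "Q / C \<le> \<bar>a j\<bar>" "Q / C \<le> \<bar>a (Suc j)\<bar>" using size j by auto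
    have "(Q / C)\<^sup>2 \<le> \<bar>a j * a (Suc j)\<bar>"
      unfolding power2_eq_square abs_mult using lower QC by (intro mult_mono) auto
    moreover have "\<bar>a j * a (Suc (Suc j)) - (a (Suc j))\<^sup>2\<bar> \<le> \<mu>"
      using minor[of "Suc j"] j by simp
    moreover have "a j \<noteq> 0" "a (Suc j) \<noteq> 0" using lower QC by auto
    ultimately show ?thesis
      unfolding r_def ratio_diff_eq_minor[OF \<open>a j \<noteq> 0\<close> \<open>a (Suc j) \<noteq> 0\<close>] abs_divide
      using QC by (intro frac_le) auto
  qed
  have drift: "\<bar>r k - r 0\<bar> \<le> k * (\<mu> / (Q / C)\<^sup>2)"
    using k by (intro abs_diff_le_of_steps step) simp
  have "a (k+1) - a 1 / Q * a k = a k * (r k - r 0)"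
    using size[of k] k QC unfolding r_def a0 by (auto simp: field_simps)
  then have "\<bar>a (k+1) - a 1 / Q * a k\<bar> = \<bar>a k\<bar> * \<bar>r k - r 0\<bar>"
    by (simp add: abs_mult)
  also have "\<dots> \<le> C * Q * (k * (\<mu> / (Q / C)\<^sup>2))"
    using size[of k] k drift by (intro mult_mono') auto
  also have "\<dots> = k * C ^ 3 * \<mu> / Q"
    using Q C by (simp add: field_simps power2_eq_square power3_eq_cube)
  finally show ?thesis .
qed

lemma powr_neg_le_one:
  fixes x a :: real
  assumes "1 \<le> x" and "0 \<le> a"
  shows "x powr - a \<le> 1"
  using ge_one_powr_ge_zero[OF assms] by (simp add: powr_minus inverse_le_1_iff)

lemma powr_one_minus:
  fixes x a :: real
  assumes "0 < x"
  shows "x powr (1 - a) = x * x powr - a"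
  using assms by (simp add: powr_diff powr_minus_divide)

lemma small_shifts_and_minors_of_approx:
  fixes p :: "nat \<Rightarrow> int" and \<xi> C K lam :: real
  assumes C: "1 \<le> C" and lam: "0 \<le> lam" and \<xi>: "\<bar>\<xi>\<bar> \<le> C" and p0: "1 \<le> p 0"
    and approx: "\<forall>i\<in>{1..n}. \<bar>of_int (p 0) * \<xi> ^ i - of_int (p i)\<bar> \<le> C * of_int (p 0) powr (-lam)"
    and K: "C\<^sup>2 + C \<le> K" "4 * C ^ (n+1) + 2 * C\<^sup>2 \<le> K"
  shows "(\<forall>i\<in>{0..<n}. \<bar>of_int (p i) * \<xi> - of_int (p (i+1))\<bar> \<le> K * of_int (p 0) powr (-lam)) \<and>
    (\<forall>i\<in>{1..<n}. \<bar>of_int (p (i-1) * p (i+1) - p i ^ 2)\<bar> \<le> K * of_int (p 0) powr (1 - lam))"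
proof -
  define Q where "Q = real_of_int (p 0)"
  define t where "t = Q powr - lam"
  have Q: "1 \<le> Q" and t: "0 \<le> t" "t \<le> 1"
    using p0 lam powr_neg_le_one[of Q lam] unfolding Q_def t_def by auto
  have err: "\<bar>of_int (p j) - Q * \<xi> ^ j\<bar> \<le> C * t" if "j \<le> n" for j
    using approx that t C unfolding Q_def t_def
    by (cases "j = 0") (auto simp: abs_minus_commute)
  have shift: "\<bar>of_int (p i) * \<xi> - of_int (p (i+1))\<bar> \<le> K * t" if "i < n" for i
  proof -
    have "\<bar>of_int (p i) * \<xi> - of_int (p (i+1))\<bar> \<le> (\<bar>\<xi>\<bar> + 1) * (C * t)"
      using that by (intro shift_error_le_power_error[OF err err]) auto
    also have "\<dots> \<le> (C + 1) * (C * t)"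
      using \<xi> C t by (intro mult_right_mono) auto
    also have "\<dots> = (C\<^sup>2 + C) * t"
      by (simp add: power2_eq_square algebra_simps)
    also have "\<dots> \<le> K * t"
      using K(1) t(1) by (rule mult_right_mono)
    finally show ?thesis .
  qed
  have minor: "\<bar>of_int (p (i-1) * p (i+1) - p i ^ 2)\<bar> \<le> K * (Q * t)" if "1 \<le> i" "i < n" for i
  proof -
    have pow: "\<bar>\<xi>\<bar> ^ j \<le> C ^ n" if "j \<le> n" for j
      using power_mono[OF \<xi>, of j] power_increasing[OF that C] by simp
    have "\<bar>of_int (p (i-1) * p (i+1) - p i ^ 2)\<bar> \<le> 4 * Q * C ^ n * (C * t) + 2 * (C * t)\<^sup>2"
      using that Q by (simp only: of_int_mult of_int_diff of_int_power)
        (rule minor_le_power_error[where \<xi> = \<xi>]; auto intro: err pow)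
    also have "\<dots> \<le> (4 * C ^ (n+1) + 2 * C\<^sup>2) * (Q * t)"
    proof -
      have "t * t \<le> Q * t" using t Q by (intro mult_right_mono) auto
      then have "C\<^sup>2 * (t * t) \<le> C\<^sup>2 * (Q * t)" by (simp add: mult_left_mono)
      then show ?thesis by (simp add: power2_eq_square algebra_simps)
    qed
    also have "\<dots> \<le> K * (Q * t)"
      using K(2) Q t by (intro mult_right_mono) auto
    finally show ?thesis .
  qed
  have "Q powr (1 - lam) = Q * t"
    using Q unfolding t_def by (simp add: powr_one_minus)
  then show ?thesis
    using shift minor unfolding Q_def t_def by auto
qed

lemma approx_of_small_minors:
  fixes p :: "nat \<Rightarrow> int" and C K lam :: real
  assumes C: "1 \<le> C" and p0: "1 \<le> p 0"
    and size: "\<forall>i\<in>{0..n}. of_int (p 0) / C \<le> of_int \<bar>p i\<bar> \<and> of_int \<bar>p i\<bar> \<le> C * of_int (p 0)"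
    and minor: "\<forall>i\<in>{1..<n}. \<bar>of_int (p (i-1) * p (i+1) - p i ^ 2)\<bar> \<le> C * of_int (p 0) powr (1 - lam)"
    and K: "real n ^ 2 * C ^ (n+4) \<le> K"
  shows "\<exists>\<xi>. \<forall>i\<in>{1..n}. \<bar>of_int (p 0) * \<xi> ^ i - of_int (p i)\<bar> \<le> K * of_int (p 0) powr (-lam)"
proof -
  define Q where "Q = real_of_int (p 0)"
  define t where "t = Q powr - lam"
  define a where "a i = real_of_int (p i)" for i
  have Q: "0 < Q" and t: "0 \<le> t" using p0 unfolding Q_def t_def by auto
  have C4: "0 \<le> C ^ 4" using C by simp
  have shift: "\<bar>a (k+1) - a 1 / Q * a k\<bar> \<le> n * C ^ 4 * t" if k: "k < n" for k
  proof -
    have "\<bar>a (k+1) - a 1 / Q * a k\<bar> \<le> k * C ^ 3 * (C * (Q * t)) / Q"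
    proof (rule shift_error_le_minor_bound[OF C Q _ _ _ k])
      show "a 0 = Q" unfolding a_def Q_def ..
      show "Q / C \<le> \<bar>a i\<bar> \<and> \<bar>a i\<bar> \<le> C * Q" if "i \<le> n" for i
        using size that unfolding a_def Q_def by auto
      show "\<bar>a (i-1) * a (i+1) - a i ^ 2\<bar> \<le> C * (Q * t)" if "i \<in> {1..<n}" for i
        using minor that Q unfolding a_def Q_def t_def by (simp add: powr_one_minus)
    qed
    also have "\<dots> = k * C ^ 4 * t"
      using Q by (simp add: eval_nat_numeral)
    also have "\<dots> \<le> n * C ^ 4 * t"
      using k C4 t by (intro mult_right_mono mult_mono) auto
    finally show ?thesis .
  qed
  have "\<bar>Q * (a 1 / Q) ^ i - a i\<bar> \<le> K * t" if i: "i \<in> {1..n}" for i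
  proof -
    have "\<bar>a 1\<bar> \<le> C * Q" using size i unfolding a_def Q_def by auto
    then have \<xi>: "\<bar>a 1 / Q\<bar> \<le> C" using Q by (simp add: abs_divide pos_divide_le_eq)
    have "\<bar>a i - Q * (a 1 / Q) ^ i\<bar> \<le> i * C ^ i * (n * C ^ 4 * t)"
      using i C t \<xi> by (intro power_error_le_shift_error[where a = a and n = n] shift)
        (auto simp: a_def Q_def)
    also have "\<dots> \<le> n * C ^ n * (n * C ^ 4 * t)"
      using i C t C4 by (intro mult_right_mono mult_mono power_increasing) auto
    also have "\<dots> = real n ^ 2 * C ^ (n+4) * t"
      by (simp add: power_add power2_eq_square)
    also have "\<dots> \<le> K * t"
      using K t by (rule mult_right_mono)
    finally show ?thesis by (simp add: abs_minus_commute)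
  qed
  then show ?thesis unfolding a_def Q_def t_def by blast
qed

theorem proposition4p1:
  fixes n :: nat and C :: real
  assumes "n \<ge> 2" and "C \<ge> 1"
  shows "\<exists>C' > 0. \<forall>lam :: real. lam > 0 \<longrightarrow>
     ((\<forall>(\<xi>::real) (p::nat \<Rightarrow> int).
         1 / C \<le> \<bar>\<xi>\<bar> \<and> \<bar>\<xi>\<bar> \<le> C \<and> p 0 \<ge> 1 \<and>
         (\<forall>i\<in>{1..n}. \<bar>of_int (p 0) * \<xi> ^ i - of_int (p i)\<bar> \<le> C * of_int (p 0) powr (-lam))
       \<longrightarrow> (\<forall>i\<in>{0..<n}. \<bar>of_int (p i) * \<xi> - of_int (p (i+1))\<bar> \<le> C' * of_int (p 0) powr (-lam)) \<and>
           (\<forall>i\<in>{1..<n}. \<bar>of_int (p (i-1) * p (i+1) - p i ^ 2)\<bar> \<le> C' * of_int (p 0) powr (1 - lam)))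
     \<and>
      (\<forall>p::nat \<Rightarrow> int.
         p 0 \<ge> 1 \<and>
         (\<forall>i\<in>{0..n}. of_int (p 0) / C \<le> of_int \<bar>p i\<bar> \<and> of_int \<bar>p i\<bar> \<le> C * of_int (p 0)) \<and>
         (\<forall>i\<in>{1..<n}. \<bar>of_int (p (i-1) * p (i+1) - p i ^ 2)\<bar> \<le> C * of_int (p 0) powr (1 - lam))
       \<longrightarrow> (\<exists>\<xi>::real. \<forall>i\<in>{1..n}. \<bar>of_int (p 0) * \<xi> ^ i - of_int (p i)\<bar> \<le> C' * of_int (p 0) powr (-lam))))"
proof -
  define K where "K = real n ^ 2 * C ^ (n+4) + 4 * C ^ (n+1) + 3 * C\<^sup>2 + C"
  have "0 \<le> real n ^ 2 * C ^ (n+4)" "0 \<le> C ^ (n+1)" "0 \<le> C\<^sup>2" using assms(2) by auto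
  then have K: "0 < K" "C\<^sup>2 + C \<le> K" "4 * C ^ (n+1) + 2 * C\<^sup>2 \<le> K" "real n ^ 2 * C ^ (n+4) \<le> K"
    using assms(2) unfolding K_def by linarith+
  show ?thesis
  proof (rule exI[of _ K], intro conjI[OF K(1)] allI impI conjI)
  qed (use small_shifts_and_minors_of_approx[OF assms(2) less_imp_le _ _ _ K(2,3)]
      approx_of_small_minors[OF assms(2) _ _ _ K(4)] in blast)+
qed

end
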